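(* Fix $Z>0$, integers $n\ge1$, $0\le l\le n-1$, and real $q>0$, $q\ne1$. Then, as $D\to\infty$ through integers, $$R_q[\rho_{n,l}]=2D\log D+D\log\!\Big[\frac{q^{\frac{1}{q-1}}}{4Ze}\Big]+\frac{q(n-l-\frac12)-\frac12}{1-q}\log D+\frac{1}{1-q}\log\mathcal F(n,l,q)+o(1),$$ where $$\mathcal F(n,l,q)=\frac{(2\pi)^{\frac{1-q}{2}}\,|q-1|^{2(n-l-1)q}}{\Gamma(n-l)^q}\,\frac{e^{(2n-3)(1-q)}}{q^{2q(n-1)}}.$$
   Context: $D$-dimensional hydrogenic atom with nuclear charge $Z>0$ (atomic units). For integers $D\ge2$, $n\ge1$, $0\le l\le n-1$ set $\eta=n+\frac{D-3}{2}$, $L=l+\frac{D-3}{2}$ (so $2L+1=2l+D-2$), $\lambda=\eta/(2Z)$ and $\tilde r=r/\lambda$. The radial position density is $$\rho_{n,l}(r)=\frac{\lambda^{-D}}{2\eta}\,\tilde r^{\,2L+1-(D-2)}e^{-\tilde r}\,\big[\widehat{\mathcal L}^{(2L+1)}_{n-l-1}(\tilde r)\big]^2,$$ which satisfies $\int_0^\infty\rho_{n,l}(r)r^{D-1}dr=1$; here $\widehat{\mathcal L}^{(\alpha)}_k(x)=\big(k!/\Gamma(k+\alpha+1)\big)^{1/2}\mathcal L^{(\alpha)}_k(x)$ is the orthonormal generalized Laguerre polynomial. The radial Rényi entropy is $$R_q[\rho_{n,l}]=\frac{1}{1-q}\log\int_0^\infty[\rho_{n,l}(r)]^q\,r^{D-1}\,dr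 .$$ $|q-1|^0:=1$. *)

theory Defs
  imports "HOL-Analysis.Analysis"
begin

definition laguerre :: "nat \<Rightarrow> real \<Rightarrow> real \<Rightarrow> real" where
  "laguerre k \<alpha> x = (\<Sum>i\<le>k. (-1)^i * Gamma (real k + \<alpha> + 1)
      / (Gamma (real i + \<alpha> + 1) * fact (k - i) * fact i) * x ^ i)"

definition laguerre_on :: "nat \<Rightarrow> real \<Rightarrow> real \<Rightarrow> real" where
  "laguerre_on k \<alpha> x = sqrt (fact k / Gamma (real k + \<alpha> + 1)) * laguerre k \<alpha> x"

definition hyd_eta :: "nat \<Rightarrow> nat \<Rightarrow> real" where
  "hyd_eta D n = real n + (real D - 3) / 2"

definition hyd_L :: "nat \<Rightarrow> nat \<Rightarrow> real" where
  "hyd_L D l = real l + (real D - 3) / 2"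

definition hyd_lambda :: "real \<Rightarrow> nat \<Rightarrow> nat \<Rightarrow> real" where
  "hyd_lambda Z D n = hyd_eta D n / (2 * Z)"

text \<open>Radial position density rho_{n,l}(r) of the D-dimensional hydrogenic atom (for r > 0).\<close>
definition hyd_rho :: "real \<Rightarrow> nat \<Rightarrow> nat \<Rightarrow> nat \<Rightarrow> real \<Rightarrow> real" where
  "hyd_rho Z D n l r =
     (let lam = hyd_lambda Z D n; \<eta> = hyd_eta D n; L = hyd_L D l; rt = r / lam in
      lam powr (- real D) / (2 * \<eta>) * rt powr (2 * L + 1 - (real D - 2)) * exp (- rt)
        * (laguerre_on (n - l - 1) (2 * L + 1) rt)\<^sup>2)"

definition renyi_rad :: "real \<Rightarrow> nat \<Rightarrow> nat \<Rightarrow> nat \<Rightarrow> real \<Rightarrow> real" where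
  "renyi_rad Z D n l q =
     1 / (1 - q) * ln (LBINT r:{0<..}. (hyd_rho Z D n l r) powr q * r ^ (D - 1))"

definition calF :: "nat \<Rightarrow> nat \<Rightarrow> real \<Rightarrow> real" where
  "calF n l q = (2 * pi) powr ((1 - q) / 2) * \<bar>q - 1\<bar> powr (2 * real (n - l - 1) * q)
      / Gamma (real (n - l)) powr q
      * exp ((2 * real n - 3) * (1 - q)) / q powr (2 * q * (real n - 1))"

end

theory Submission
  imports Defs "HOL-Real_Asymp.Real_Asymp" "HOL-Computational_Algebra.Polynomial"
begin

text \<open>Substituting \<open>r = \<lambda> x / q\<close> turns the Renyi integral into an explicit prefactor times the average
  of \<open>|D^(-k) L_k^(D+2l-2)(x/q)|^(2q)\<close>, \<open>k = n - l - 1\<close>, against the Gamma density of shape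
  \<open>D + 2lq\<close>. That density concentrates near \<open>x = D\<close>, where the normalised Laguerre polynomial
  converges coefficientwise to \<open>(1 - x/D)^k / k!\<close>; hence the average tends to \<open>|(1 - 1/q)^k / k!|^(2q)\<close>.
  Stirling's formula for the Gamma factors of the prefactor, derived here from Wallis' product, then
  yields the expansion.\<close>

lemma Gamma_real_set_integral:
  fixes s :: real
  assumes "s > 0"
  shows "set_integrable lborel {0<..} (\<lambda>t. t powr (s - 1) * exp (-t))"
    and "(LBINT t:{0<..}. t powr (s - 1) * exp (-t)) = Gamma s"
proof -
  have eq: "(\<lambda>t. indicator {0<..} t *\<^sub>R (t powr (s - 1) * exp (-t)))
      = (\<lambda>t::real. indicator {0..} t * t powr (s - 1) / exp t)"
    by (rule ext) (auto simp: indicator_def exp_minus field_simps)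
  have "(\<integral>\<^sup>+x. ennreal (indicator {0..} x * x powr (s - 1) / exp x) \<partial>lborel) = ennreal (Gamma s)"
    using Gamma_conv_nn_integral_real[OF assms] by simp
  then have "integrable lborel (\<lambda>t::real. indicator {0..} t * t powr (s - 1) / exp t) \<and>
      lebesgue_integral lborel (\<lambda>t::real. indicator {0..} t * t powr (s - 1) / exp t) = Gamma s"
    using assms
    by (subst nn_integral_eq_integrable[symmetric]) (auto simp: indicator_def intro!: Gamma_real_nonneg)
  then show "set_integrable lborel {0<..} (\<lambda>t. t powr (s - 1) * exp (-t))"
    and "(LBINT t:{0<..}. t powr (s - 1) * exp (-t)) = Gamma s"
    unfolding set_integrable_def set_lebesgue_integral_def eq by auto
qed

definition gamma_weight :: "real \<Rightarrow> real \<Rightarrow> real" where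
  "gamma_weight m s = (if s > 0 then s powr m * exp (-s) else 0)"

lemma gamma_weight_nonneg: "gamma_weight m s \<ge> 0"
  by (simp add: gamma_weight_def)

lemma gamma_weight_measurable [measurable]: "gamma_weight m \<in> borel_measurable borel"
  unfolding gamma_weight_def by measurable

lemma gamma_weight_moment:
  assumes "m > -1"
  shows "integrable lborel (\<lambda>s. gamma_weight m s * s ^ j)"
    and "(\<integral>s. gamma_weight m s * s ^ j \<partial>lborel) = Gamma (m + real j + 1)"
proof -
  have pos: "m + real j + 1 > 0"
    using assms by simp
  have eq: "(\<lambda>s. gamma_weight m s * s ^ j)
      = (\<lambda>t. indicator {0<..} t *\<^sub>R (t powr ((m + real j + 1) - 1) * exp (-t)))"
    by (rule ext) (auto simp: gamma_weight_def indicator_def powr_add powr_realpow)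
  show "integrable lborel (\<lambda>s. gamma_weight m s * s ^ j)"
    using Gamma_real_set_integral(1)[OF pos] unfolding eq set_integrable_def .
  show "(\<integral>s. gamma_weight m s * s ^ j \<partial>lborel) = Gamma (m + real j + 1)"
    using Gamma_real_set_integral(2)[OF pos] unfolding eq set_lebesgue_integral_def .
qed

lemma gamma_weight_poly:
  fixes p :: "real poly"
  assumes "m > -1"
  shows "integrable lborel (\<lambda>s. gamma_weight m s * poly p (s / a))"
    and "(\<integral>s. gamma_weight m s * poly p (s / a) \<partial>lborel)
           = (\<Sum>i\<le>degree p. coeff p i * Gamma (m + real i + 1) / a ^ i)"
proof -
  have eq: "(\<lambda>s. gamma_weight m s * poly p (s / a))
      = (\<lambda>s. \<Sum>i\<le>degree p. (coeff p i / a ^ i) * (gamma_weight m s * s ^ i))"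
    by (rule ext) (simp add: poly_altdef sum_distrib_left power_divide mult_ac)
  show "integrable lborel (\<lambda>s. gamma_weight m s * poly p (s / a))"
    unfolding eq
    by (intro Bochner_Integration.integrable_sum Bochner_Integration.integrable_mult_right
        gamma_weight_moment(1)[OF assms])
  show "(\<integral>s. gamma_weight m s * poly p (s / a) \<partial>lborel)
      = (\<Sum>i\<le>degree p. coeff p i * Gamma (m + real i + 1) / a ^ i)"
    unfolding eq using gamma_weight_moment[OF assms] by (subst Bochner_Integration.integral_sum) auto
qed

section \<open>Stirling's formula\<close>

lemma ln_one_plus_ge:
  fixes x :: real
  assumes "x \<ge> 0"
  shows "2 * x / (2 + x) \<le> ln (1 + x)"
proof -
  let ?f = "\<lambda>t::real. ln (1 + t) - 2 * t / (2 + t)"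
  have "?f 0 \<le> ?f x"
  proof (rule DERIV_nonneg_imp_nondecreasing[OF assms])
    fix t :: real
    assume t: "0 \<le> t" "t \<le> x"
    have "(?f has_real_derivative (1 / (1 + t) - (2 * (2 + t) - 2 * t) / (2 + t)^2)) (at t)"
      using t by (auto intro!: derivative_eq_intros simp: power2_eq_square)
    moreover have "1 / (1 + t) - (2 * (2 + t) - 2 * t) / (2 + t)^2 = t^2 / ((1 + t) * (2 + t)^2)"
      using t by (simp add: divide_simps power2_eq_square) algebra
    moreover have "t^2 / ((1 + t) * (2 + t)^2) \<ge> 0"
      using t by simp
    ultimately show "\<exists>y. (?f has_real_derivative y) (at t) \<and> 0 \<le> y"
      by metis
  qed
  then show ?thesis
    by simp
qed

lemma ln_one_plus_le:
  fixes x :: real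
  assumes "x \<ge> 0"
  shows "ln (1 + x) \<le> x - x^2 / 2 + x^3 / 3"
proof -
  let ?f = "\<lambda>t::real. t - t^2 / 2 + t^3 / 3 - ln (1 + t)"
  have "?f 0 \<le> ?f x"
  proof (rule DERIV_nonneg_imp_nondecreasing[OF assms])
    fix t :: real
    assume t: "0 \<le> t" "t \<le> x"
    have "(?f has_real_derivative (1 - t + t^2 - 1 / (1 + t))) (at t)"
      using t by (auto intro!: derivative_eq_intros simp: power2_eq_square field_simps)
    moreover have "1 - t + t^2 - 1 / (1 + t) = t^3 / (1 + t)"
      using t by (simp add: field_simps power2_eq_square power3_eq_cube)
    ultimately show "\<exists>y. (?f has_real_derivative y) (at t) \<and> 0 \<le> y"
      using t by fastforce
  qed
  then show ?thesis
    by simp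
qed

definition stirling_remainder :: "nat \<Rightarrow> real" where
  "stirling_remainder N = ln (fact N) - ((real N + 1/2) * ln (real N) - real N)"

lemma stirling_remainder_diff:
  assumes "N \<ge> 1"
  shows "stirling_remainder N - stirling_remainder (Suc N) = (real N + 1/2) * ln (1 + 1 / real N) - 1"
proof -
  have "1 + 1 / real N = (real N + 1) / real N"
    using assms by (simp add: field_simps)
  then have h1: "ln (1 + 1 / real N) = ln (real N + 1) - ln (real N)"
    using assms by (simp add: ln_div)
  have h2: "ln (fact (Suc N) :: real) = ln (real N + 1) + ln (fact N)"
    by (simp add: ln_mult add.commute)
  show ?thesis
    unfolding stirling_remainder_def h1 h2 by (simp add: algebra_simps)
qed

lemma stirling_remainder_diff_bounds:
  assumes "N \<ge> 1"
  shows "0 \<le> stirling_remainder N - stirling_remainder (Suc N)"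
    and "stirling_remainder N - stirling_remainder (Suc N) \<le> 1 / (4 * real N^2)"
proof -
  define x where "x = 1 / real N"
  have x: "x > 0" "x \<le> 1"
    using assms by (auto simp: x_def)
  have N: "real N + 1/2 = (2 + x) / (2 * x)"
    using assms by (simp add: x_def field_simps)
  have "1 = (real N + 1/2) * (2 * x / (2 + x))"
    unfolding N using x by (simp add: divide_simps)
  also have "\<dots> \<le> (real N + 1/2) * ln (1 + x)"
    using ln_one_plus_ge[of x] x by (intro mult_left_mono) auto
  finally show "0 \<le> stirling_remainder N - stirling_remainder (Suc N)"
    using stirling_remainder_diff[OF assms] by (simp add: x_def)
  have "(real N + 1/2) * ln (1 + x) \<le> (real N + 1/2) * (x - x^2 / 2 + x^3 / 3)"
    using ln_one_plus_le[of x] x by (intro mult_left_mono) auto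
  also have "\<dots> = 1 + x^2 / 12 + x^3 / 6"
    unfolding N using x by (simp add: divide_simps power2_eq_square power3_eq_cube) algebra
  also have "\<dots> \<le> 1 + x^2 / 4"
    using x power_decreasing[of 2 3 x] by simp
  finally show "stirling_remainder N - stirling_remainder (Suc N) \<le> 1 / (4 * real N^2)"
    using stirling_remainder_diff[OF assms] by (simp add: x_def power2_eq_square)
qed

text \<open>The remainder decreases, and adding \<open>-1 / (2 N)\<close> turns it into an increasing sequence.\<close>

lemma stirling_remainder_convergent: "convergent stirling_remainder"
proof -
  define c where "c i = stirling_remainder (Suc i)" for i
  define b where "b i = stirling_remainder (Suc i) - 1 / (2 * real (Suc i))" for i
  have dec: "decseq c"
    unfolding c_def by (rule decseq_SucI) (use stirling_remainder_diff_bounds(1) in force)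
  have inc: "incseq b"
  proof (rule incseq_SucI)
    fix i
    have "1 / (4 * real (Suc i)^2) \<le> 1 / (2 * real (Suc i)) - 1 / (2 * real (Suc (Suc i)))"
      by (simp add: divide_simps power2_eq_square) (simp add: algebra_simps)
    then show "b i \<le> b (Suc i)"
      using stirling_remainder_diff_bounds(2)[of "Suc i"] unfolding b_def by simp
  qed
  have "b 0 \<le> c i" for i
  proof -
    have "b 0 \<le> b i"
      using inc by (simp add: incseq_def)
    also have "b i \<le> c i"
      by (simp add: b_def c_def)
    finally show ?thesis .
  qed
  then obtain L where "c \<longlonglongrightarrow> L"
    using decseq_convergent[OF dec] by blast
  then show ?thesis
    unfolding c_def convergent_def by (blast intro: LIMSEQ_imp_Suc)
qed

lemma wallis_partial_product:
  "(\<Prod>k=1..n. 4 * real k^2 / (4 * real k^2 - 1)) = (2^n * fact n)^4 / ((fact (2 * n))^2 * (2 * real n + 1))"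
proof (induction n)
  case 0
  then show ?case
    by simp
next
  case (Suc n)
  define P :: real where "P = (2^n * fact n)^4"
  define F :: real where "F = fact (2 * n)"
  have P: "P > 0" and F: "F > 0"
    by (simp_all add: P_def F_def)
  have "(\<Prod>k=1..Suc n. 4 * real k^2 / (4 * real k^2 - 1))
      = P / (F^2 * (2 * real n + 1)) * (4 * (real n + 1)^2 / ((2 * real n + 1) * (2 * real n + 3)))"
    using Suc unfolding P_def F_def by (simp add: algebra_simps power2_eq_square)
  also have "\<dots> = 16 * (real n + 1)^4 * P / (((2 * real n + 2) * (2 * real n + 1) * F)^2 * (2 * real n + 3))"
    using P F by (simp add: divide_simps) algebra
  also have "\<dots> = (2^Suc n * fact (Suc n))^4 / ((fact (2 * Suc n))^2 * (2 * real (Suc n) + 1))"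
  proof -
    have "fact (2 * Suc n) = (2 * real n + 2) * (2 * real n + 1) * F"
      unfolding F_def by (simp add: algebra_simps)
    moreover have "(2^Suc n * fact (Suc n) :: real) = 2 * (real n + 1) * (2^n * fact n)"
      by (simp add: algebra_simps)
    then have "(2^Suc n * fact (Suc n))^4 = 16 * (real n + 1)^4 * P"
      unfolding P_def by (simp only: power_mult_distrib) simp
    ultimately show ?thesis
      by (simp add: algebra_simps)
  qed
  finally show ?case .
qed

lemma ln_fact_stirling:
  "(\<lambda>N. ln (fact N) - ((real N + 1/2) * ln (real N) - real N)) \<longlonglongrightarrow> ln (2 * pi) / 2"
proof -
  obtain C where C: "stirling_remainder \<longlonglongrightarrow> C"
    using stirling_remainder_convergent by (auto simp: convergent_def)
  have C2: "(\<lambda>N. stirling_remainder (2 * N)) \<longlonglongrightarrow> C"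
    using LIMSEQ_subseq_LIMSEQ[OF C, of "\<lambda>N. 2 * N"] by (simp add: strict_mono_def o_def)
  define W where "W n = (\<Prod>k=1..n. 4 * real k^2 / (4 * real k^2 - 1))" for n
  have lim_W: "(\<lambda>n. ln (W n)) \<longlonglongrightarrow> ln (pi / 2)"
    unfolding W_def using tendsto_ln[OF wallis] by simp
  have W_eq: "ln (W n) = 4 * stirling_remainder n - 2 * stirling_remainder (2 * n)
      + (ln (real n) - ln 2 - ln (2 * real n + 1))" if "n \<ge> 1" for n
  proof -
    have "ln (W n) = 4 * (real n * ln 2 + ln (fact n)) - (2 * ln (fact (2 * n)) + ln (2 * real n + 1))"
      unfolding W_def wallis_partial_product
      by (simp add: ln_div ln_mult ln_realpow power_mult_distrib)
    moreover have "ln (2 * real n) = ln 2 + ln (real n)"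
      using that by (simp add: ln_mult)
    ultimately show ?thesis
      using that unfolding stirling_remainder_def by (simp add: algebra_simps)
  qed
  have "(\<lambda>n. ln (real n) - ln 2 - ln (2 * real n + 1)) \<longlonglongrightarrow> - 2 * ln 2"
    by real_asymp
  then have "(\<lambda>n. 4 * stirling_remainder n - 2 * stirling_remainder (2 * n)
      + (ln (real n) - ln 2 - ln (2 * real n + 1))) \<longlonglongrightarrow> 4 * C - 2 * C + (- 2 * ln 2)"
    by (intro tendsto_intros C C2)
  then have "(\<lambda>n. ln (W n)) \<longlonglongrightarrow> 4 * C - 2 * C + (- 2 * ln 2)"
    by (rule Lim_transform_eventually)
      (use eventually_ge_at_top[of 1] in \<open>eventually_elim, simp add: W_eq\<close>)
  then have "ln (pi / 2) = 4 * C - 2 * C + (- 2 * ln 2)"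
    using lim_W LIMSEQ_unique by blast
  then have C_eq: "C = ln (2 * pi) / 2"
    using pi_gt_zero by (simp add: ln_div ln_mult field_simps)
  show ?thesis
    using C unfolding stirling_remainder_def C_eq .
qed

lemma ln_Gamma_shift_pos:
  fixes z :: real
  assumes z: "z > 0"
  shows "(\<lambda>D::nat. ln (Gamma (real D + z)) - ln (Gamma (real D)) - z * ln (real D)) \<longlonglongrightarrow> 0"
proof -
  have zn: "z \<notin> \<int>\<^sub>\<le>\<^sub>0"
    using z by (auto elim!: nonpos_Ints_cases)
  have Gz: "Gamma z > 0"
    using z by (rule Gamma_real_pos)
  have "(\<lambda>n. Gamma_series z n / Gamma z) \<longlonglongrightarrow> 1"
    using tendsto_divide[OF Gamma_series_LIMSEQ[of z] tendsto_const[of "Gamma z"]] Gz by simp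
  from tendsto_ln[OF this] have "(\<lambda>n. ln (Gamma_series z n / Gamma z)) \<longlonglongrightarrow> 0"
    by simp
  moreover have "(\<lambda>n::nat. z * (ln (real n + 1) - ln (real n))) \<longlonglongrightarrow> 0"
    by real_asymp
  ultimately have lim: "(\<lambda>n. - ln (Gamma_series z n / Gamma z) - z * (ln (real n + 1) - ln (real n)))
      \<longlonglongrightarrow> 0"
    by (metis (no_types) tendsto_diff tendsto_minus diff_0 neg_0_equal_iff_equal)
  have eq: "- ln (Gamma_series z n / Gamma z) - z * (ln (real n + 1) - ln (real n))
      = ln (Gamma (real (Suc n) + z)) - ln (Gamma (real (Suc n))) - z * ln (real (Suc n))"
    if "n > 0" for n
  proof -
    have G: "Gamma (z + real (n + 1)) > 0"
      using z by (intro Gamma_real_pos) simp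
    have "Gamma_series z n / Gamma z = fact n * exp (z * ln (real n)) / Gamma (z + real (n + 1))"
      unfolding Gamma_series_def pochhammer_Gamma[OF zn] using Gz G by (simp add: field_simps)
    then have "ln (Gamma_series z n / Gamma z)
        = ln (fact n) + z * ln (real n) - ln (Gamma (z + real (n + 1)))"
      using G by (simp add: ln_div ln_mult)
    moreover have "Gamma (real (Suc n)) = fact n"
      using Gamma_fact[of n] by simp
    ultimately show ?thesis
      by (simp add: algebra_simps)
  qed
  have "(\<lambda>n. ln (Gamma (real (Suc n) + z)) - ln (Gamma (real (Suc n))) - z * ln (real (Suc n)))
      \<longlonglongrightarrow> 0"
    by (rule Lim_transform_eventually[OF lim])
      (use eventually_gt_at_top[of "0::nat"] in \<open>eventually_elim, simp only: eq\<close>)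
  then show ?thesis
    by (rule LIMSEQ_imp_Suc)
qed

text \<open>Shifting down from a positive shift \<open>a + K\<close> costs the factors of a Pochhammer product, each
  of which is asymptotic to \<open>D\<close>.\<close>

lemma ln_Gamma_shift_asymptotic:
  fixes a :: real
  shows "(\<lambda>D::nat. ln (Gamma (real D + a)) - ln (Gamma (real D)) - a * ln (real D)) \<longlonglongrightarrow> 0"
proof -
  obtain K :: nat where K: "real K > -a"
    using reals_Archimedean2 by blast
  have "(\<lambda>D::nat. ln (Gamma (real D + (a + real K))) - ln (Gamma (real D)) - (a + real K) * ln (real D))
      \<longlonglongrightarrow> 0"
    using K by (intro ln_Gamma_shift_pos) simp
  moreover have "(\<lambda>D::nat. \<Sum>j<K. ln (real D + a + real j) - ln (real D)) \<longlonglongrightarrow> 0"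
  proof (intro tendsto_null_sum)
    fix j :: nat
    show "(\<lambda>D::nat. ln (real D + a + real j) - ln (real D)) \<longlonglongrightarrow> 0"
      by real_asymp
  qed
  ultimately have lim: "(\<lambda>D::nat. (ln (Gamma (real D + (a + real K))) - ln (Gamma (real D))
      - (a + real K) * ln (real D)) - (\<Sum>j<K. ln (real D + a + real j) - ln (real D))) \<longlonglongrightarrow> 0"
    using tendsto_diff by fastforce
  have "eventually (\<lambda>D. (ln (Gamma (real D + (a + real K))) - ln (Gamma (real D))
      - (a + real K) * ln (real D)) - (\<Sum>j<K. ln (real D + a + real j) - ln (real D))
      = ln (Gamma (real D + a)) - ln (Gamma (real D)) - a * ln (real D)) sequentially"
  proof (rule eventually_mono[OF eventually_gt_at_top[of "nat \<lceil>- a\<rceil>"]])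
    fix D :: nat
    assume "nat \<lceil>- a\<rceil> < D"
    then have pos: "real D + a > 0"
      by linarith
    then have nz: "real D + a \<notin> \<int>\<^sub>\<le>\<^sub>0"
      by (auto elim!: nonpos_Ints_cases)
    have "(\<Prod>j<K. real D + a + real j) = Gamma (real D + a + real K) / Gamma (real D + a)"
      using pochhammer_Gamma[OF nz, of K] by (simp add: pochhammer_prod atLeast0LessThan)
    then have "Gamma (real D + (a + real K)) = Gamma (real D + a) * (\<Prod>j<K. real D + a + real j)"
      using Gamma_real_pos[OF pos] by (simp add: add.assoc)
    then have "ln (Gamma (real D + (a + real K)))
        = ln (Gamma (real D + a)) + (\<Sum>j<K. ln (real D + a + real j))"
      using pos Gamma_real_pos[OF pos]
      by (simp add: ln_mult_pos prod_pos ln_prod add_pos_nonneg)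
    then show "(ln (Gamma (real D + (a + real K))) - ln (Gamma (real D))
        - (a + real K) * ln (real D)) - (\<Sum>j<K. ln (real D + a + real j) - ln (real D))
        = ln (Gamma (real D + a)) - ln (Gamma (real D)) - a * ln (real D)"
      by (simp add: sum_subtractf algebra_simps)
  qed
  with lim show ?thesis
    by (rule Lim_transform_eventually)
qed

definition ln_Gamma_stirling_error :: "real \<Rightarrow> nat \<Rightarrow> real" where
  "ln_Gamma_stirling_error a D =
     ln (Gamma (real D + a)) - ((real D + a - 1/2) * ln (real D) - real D + ln (2 * pi) / 2)"

lemma ln_Gamma_stirling: "ln_Gamma_stirling_error a \<longlonglongrightarrow> 0"
proof -
  have "(\<lambda>D::nat. (ln (Gamma (real D + a)) - ln (Gamma (real D)) - a * ln (real D))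
      - (ln (Gamma (real D + 1)) - ln (Gamma (real D)) - 1 * ln (real D))
      + (ln (fact D) - ((real D + 1/2) * ln (real D) - real D) - ln (2 * pi) / 2)) \<longlonglongrightarrow> 0 - 0 + 0"
    using ln_fact_stirling by (intro tendsto_intros ln_Gamma_shift_asymptotic) (simp add: LIM_zero)
  moreover have "Gamma (real D + 1) = fact D" for D
    using Gamma_fact[of D] by (simp add: add.commute)
  ultimately show ?thesis
    unfolding ln_Gamma_stirling_error_def[abs_def] by (simp add: algebra_simps)
qed

lemma Gamma_shift_ratio_asymptotic:
  fixes b c :: real
  shows "(\<lambda>D::nat. Gamma (real D + c + b) / (Gamma (real D + c) * real D powr b)) \<longlonglongrightarrow> 1"
proof -
  have "(\<lambda>D::nat. exp ((ln (Gamma (real D + (c + b))) - ln (Gamma (real D)) - (c + b) * ln (real D))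
      - (ln (Gamma (real D + c)) - ln (Gamma (real D)) - c * ln (real D)))) \<longlonglongrightarrow> exp (0 - 0)"
    by (intro tendsto_intros ln_Gamma_shift_asymptotic)
  moreover have "eventually (\<lambda>D. exp ((ln (Gamma (real D + (c + b))) - ln (Gamma (real D))
      - (c + b) * ln (real D)) - (ln (Gamma (real D + c)) - ln (Gamma (real D)) - c * ln (real D)))
      = Gamma (real D + c + b) / (Gamma (real D + c) * real D powr b)) sequentially"
  proof (rule eventually_mono[OF eventually_gt_at_top[of "nat \<lceil>\<bar>c\<bar> + \<bar>b\<bar>\<rceil>"]])
    fix D :: nat
    assume "nat \<lceil>\<bar>c\<bar> + \<bar>b\<bar>\<rceil> < D"
    then have "real D + c > 0" "real D + c + b > 0" "real D > 0"
      by linarith+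
    then show "exp ((ln (Gamma (real D + (c + b))) - ln (Gamma (real D)) - (c + b) * ln (real D))
        - (ln (Gamma (real D + c)) - ln (Gamma (real D)) - c * ln (real D)))
        = Gamma (real D + c + b) / (Gamma (real D + c) * real D powr b)"
      using Gamma_real_pos[of "real D + c"] Gamma_real_pos[of "real D + c + b"]
      by (simp add: exp_diff exp_add powr_def add_ac algebra_simps)
  qed
  ultimately show ?thesis
    using Lim_transform_eventually by fastforce
qed

section \<open>Concentration of the Gamma distribution\<close>

lemma gamma_weight_poly_scaled_limit:
  fixes p :: "real poly" and c q :: real
  assumes q: "q > 0"
  shows "(\<lambda>D::nat. (\<integral>s. gamma_weight (real D + c) s * poly p (s / (q * real D)) \<partial>lborel)
      / Gamma (real D + c + 1)) \<longlonglongrightarrow> poly p (1 / q)"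
proof -
  have "(\<lambda>D::nat. \<Sum>i\<le>degree p. coeff p i * (1 / q)^i
      * (Gamma (real D + (c + 1) + real i) / (Gamma (real D + (c + 1)) * real D powr real i)))
      \<longlonglongrightarrow> (\<Sum>i\<le>degree p. coeff p i * (1 / q)^i * 1)"
    by (intro tendsto_intros Gamma_shift_ratio_asymptotic)
  moreover have "eventually (\<lambda>D. (\<Sum>i\<le>degree p. coeff p i * (1 / q)^i
      * (Gamma (real D + (c + 1) + real i) / (Gamma (real D + (c + 1)) * real D powr real i)))
      = (\<integral>s. gamma_weight (real D + c) s * poly p (s / (q * real D)) \<partial>lborel)
        / Gamma (real D + c + 1)) sequentially"
  proof (rule eventually_mono[OF eventually_gt_at_top[of "nat \<lceil>\<bar>c\<bar>\<rceil>"]])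
    fix D :: nat
    assume "nat \<lceil>\<bar>c\<bar>\<rceil> < D"
    then have D: "real D > 0" "real D + c > -1"
      by linarith+
    show "(\<Sum>i\<le>degree p. coeff p i * (1 / q)^i
        * (Gamma (real D + (c + 1) + real i) / (Gamma (real D + (c + 1)) * real D powr real i)))
        = (\<integral>s. gamma_weight (real D + c) s * poly p (s / (q * real D)) \<partial>lborel)
          / Gamma (real D + c + 1)"
      unfolding gamma_weight_poly(2)[OF D(2)] sum_divide_distrib
      using D q by (intro sum.cong) (simp_all add: powr_realpow power_divide power_mult_distrib add_ac)
  qed
  ultimately show ?thesis
    by (simp add: poly_altdef Lim_transform_eventually)
qed

lemma gamma_weight_average_deviation:
  fixes f :: "real \<Rightarrow> real" and p :: "real poly" and m a L e C :: real
  assumes m: "m > -1" and a: "a > 0" and f_meas [measurable]: "f \<in> borel_measurable borel"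
    and dev: "\<And>u. u \<ge> 0 \<Longrightarrow> \<bar>f u - L\<bar> \<le> e + C * poly p u"
  shows "\<bar>(\<integral>s. gamma_weight m s * f (s / a) \<partial>lborel) / Gamma (m + 1) - L\<bar>
    \<le> e + C * ((\<integral>s. gamma_weight m s * poly p (s / a) \<partial>lborel) / Gamma (m + 1))"
proof -
  define w where "w = gamma_weight m"
  define d where "d = (\<lambda>s. w s * (f (s / a) - L))"
  define h where "h = (\<lambda>s. e * w s + C * (w s * poly p (s / a)))"
  have G: "Gamma (m + 1) > 0"
    using m by (intro Gamma_real_pos) simp
  have d_le_h: "\<bar>d s\<bar> \<le> h s" for s
  proof (cases "s > 0")
    case True
    then have "\<bar>f (s / a) - L\<bar> \<le> e + C * poly p (s / a)"
      using a by (intro dev) simp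
    then have "w s * \<bar>f (s / a) - L\<bar> \<le> w s * (e + C * poly p (s / a))"
      unfolding w_def by (rule mult_left_mono[OF _ gamma_weight_nonneg])
    moreover have "\<bar>d s\<bar> = w s * \<bar>f (s / a) - L\<bar>"
      using gamma_weight_nonneg[of m s] by (simp add: d_def w_def abs_mult)
    ultimately show ?thesis
      by (simp add: h_def algebra_simps)
  qed (simp add: d_def h_def w_def gamma_weight_def)
  have int_w: "integrable lborel w" "integral\<^sup>L lborel w = Gamma (m + 1)"
    using gamma_weight_moment[OF m, of 0] by (simp_all add: w_def)
  have int_h: "integrable lborel h"
    unfolding h_def w_def using int_w gamma_weight_poly(1)[OF m] by (auto simp: w_def)
  have int_d: "integrable lborel d"
  proof (rule Bochner_Integration.integrable_bound[OF int_h _ AE_I2])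
    show "d \<in> borel_measurable lborel"
      unfolding d_def w_def by measurable
    show "norm (d s) \<le> norm (h s)" for s
      using order_trans[OF d_le_h abs_ge_self] by simp
  qed
  have "d = (\<lambda>s. gamma_weight m s * f (s / a) - L * gamma_weight m s)"
    by (rule ext) (simp add: d_def w_def algebra_simps)
  moreover have "integrable lborel (\<lambda>s. gamma_weight m s * f (s / a))"
    using Bochner_Integration.integrable_add[OF int_d Bochner_Integration.integrable_mult_right[OF int_w(1), of L]]
    by (simp add: d_def w_def algebra_simps)
  ultimately have "integral\<^sup>L lborel d = (\<integral>s. gamma_weight m s * f (s / a) \<partial>lborel) - L * Gamma (m + 1)"
    using int_w by (simp add: w_def)
  moreover have "\<bar>integral\<^sup>L lborel d\<bar> \<le> integral\<^sup>L lborel h"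
    by (rule integral_abs_bound_integral[OF int_d int_h d_le_h])
  moreover have "integral\<^sup>L lborel h
      = e * Gamma (m + 1) + C * (\<integral>s. gamma_weight m s * poly p (s / a) \<partial>lborel)"
    using int_w gamma_weight_poly(1)[OF m] by (simp add: h_def w_def)
  ultimately have "\<bar>(\<integral>s. gamma_weight m s * f (s / a) \<partial>lborel) - L * Gamma (m + 1)\<bar> / Gamma (m + 1)
      \<le> (e * Gamma (m + 1) + C * (\<integral>s. gamma_weight m s * poly p (s / a) \<partial>lborel)) / Gamma (m + 1)"
    using G by (intro divide_right_mono) auto
  moreover have "(\<integral>s. gamma_weight m s * f (s / a) \<partial>lborel) / Gamma (m + 1) - L
      = ((\<integral>s. gamma_weight m s * f (s / a) \<partial>lborel) - L * Gamma (m + 1)) / Gamma (m + 1)"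
    using G by (simp add: diff_divide_distrib)
  ultimately show ?thesis
    using G by (simp add: abs_divide add_divide_distrib)
qed

text \<open>For \<open>s\<close> Gamma-distributed with shape \<open>D + c + 1\<close>, the variable \<open>s / (q D)\<close> concentrates at
  \<open>1/q\<close> with variance \<open>O(1/D)\<close>; hence a deviation that is quadratic near \<open>1/q\<close> and of polynomial
  growth does not contribute in the limit.\<close>

lemma gamma_weight_concentration:
  fixes q c L :: real and g :: "nat \<Rightarrow> real \<Rightarrow> real" and N :: nat
  assumes q: "q > 0"
    and g_meas: "\<And>D. g D \<in> borel_measurable borel"
    and g_dev: "\<And>\<epsilon>. \<epsilon> > 0 \<Longrightarrow> \<exists>C. eventually (\<lambda>D. \<forall>u\<ge>0.
       \<bar>g D u - L\<bar> \<le> \<epsilon> + C * ((u - 1 / q)^2 * (1 + u)^N)) sequentially"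
  shows "(\<lambda>D::nat. (\<integral>s. gamma_weight (real D + c) s * g D (s / (q * real D)) \<partial>lborel)
      / Gamma (real D + c + 1)) \<longlonglongrightarrow> L"
proof (rule tendstoI)
  fix \<epsilon> :: real
  assume \<epsilon>: "\<epsilon> > 0"
  define p :: "real poly" where "p = [:- 1 / q, 1:]^2 * [:1, 1:]^N"
  have poly_p: "poly p u = (u - 1 / q)^2 * (1 + u)^N" for u
    by (simp add: p_def power2_eq_square algebra_simps)
  obtain C where C: "eventually (\<lambda>D. \<forall>u\<ge>0. \<bar>g D u - L\<bar> \<le> \<epsilon> / 2 + C * poly p u) sequentially"
    using g_dev[of "\<epsilon> / 2"] \<epsilon> unfolding poly_p by auto
  have "(\<lambda>D. C * ((\<integral>s. gamma_weight (real D + c) s * poly p (s / (q * real D)) \<partial>lborel)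
      / Gamma (real D + c + 1))) \<longlonglongrightarrow> C * poly p (1 / q)"
    by (intro tendsto_intros gamma_weight_poly_scaled_limit q)
  moreover have "C * poly p (1 / q) < \<epsilon> / 2"
    using \<epsilon> by (simp add: poly_p)
  ultimately have small: "eventually (\<lambda>D. C * ((\<integral>s. gamma_weight (real D + c) s
      * poly p (s / (q * real D)) \<partial>lborel) / Gamma (real D + c + 1)) < \<epsilon> / 2) sequentially"
    by (rule order_tendstoD(2))
  show "eventually (\<lambda>D. dist ((\<integral>s. gamma_weight (real D + c) s * g D (s / (q * real D)) \<partial>lborel)
      / Gamma (real D + c + 1)) L < \<epsilon>) sequentially"
    using C small eventually_gt_at_top[of "nat \<lceil>\<bar>c\<bar>\<rceil>"]
  proof eventually_elim
    case (elim D)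
    then have "real D + c > -1" "q * real D > 0"
      using q by (linarith, simp)
    then have "\<bar>(\<integral>s. gamma_weight (real D + c) s * g D (s / (q * real D)) \<partial>lborel) / Gamma (real D + c + 1) - L\<bar>
        \<le> \<epsilon> / 2 + C * ((\<integral>s. gamma_weight (real D + c) s * poly p (s / (q * real D)) \<partial>lborel)
          / Gamma (real D + c + 1))"
      using elim(1) by (intro gamma_weight_average_deviation g_meas) auto
    then show ?case
      using elim(2) unfolding dist_real_def by linarith
  qed
qed

lemma abs_sum_power_le:
  fixes u :: real
  shows "\<bar>\<Sum>i\<le>k. a i * u^i\<bar> \<le> (\<Sum>i\<le>k. \<bar>a i\<bar>) * (1 + \<bar>u\<bar>)^k"
proof -
  have "\<bar>\<Sum>i\<le>k. a i * u^i\<bar> \<le> (\<Sum>i\<le>k. \<bar>a i\<bar> * \<bar>u\<bar>^i)"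
    using sum_abs[of "\<lambda>i. a i * u^i"] by (simp add: abs_mult power_abs)
  also have "\<dots> \<le> (\<Sum>i\<le>k. \<bar>a i\<bar> * (1 + \<bar>u\<bar>)^k)"
  proof (intro sum_mono mult_left_mono)
    fix i
    assume "i \<in> {..k}"
    then have "\<bar>u\<bar>^i \<le> (1 + \<bar>u\<bar>)^i" "(1 + \<bar>u\<bar>)^i \<le> (1 + \<bar>u\<bar>)^k"
      by (auto intro: power_mono power_increasing)
    then show "\<bar>u\<bar>^i \<le> (1 + \<bar>u\<bar>)^k"
      by linarith
  qed simp
  finally show ?thesis
    by (simp add: sum_distrib_right)
qed

lemma poly_coeffs_tendsto_locally_uniform:
  fixes b :: "nat \<Rightarrow> nat \<Rightarrow> real" and \<beta> :: "nat \<Rightarrow> real"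
  assumes conv: "\<And>i. i \<le> k \<Longrightarrow> (\<lambda>D. b D i) \<longlonglongrightarrow> \<beta> i" and "\<rho> > 0"
  shows "\<exists>\<eta>>0. eventually (\<lambda>D. \<forall>u. \<bar>u - u0\<bar> < \<eta> \<longrightarrow>
      \<bar>(\<Sum>i\<le>k. b D i * u^i) - (\<Sum>i\<le>k. \<beta> i * u0^i)\<bar> < \<rho>) sequentially"
proof -
  have "continuous (at u0) (\<lambda>u. \<Sum>i\<le>k. \<beta> i * u^i)"
    by (intro continuous_intros)
  then obtain \<eta>0 where \<eta>0: "\<eta>0 > 0"
    and near: "\<And>u. \<bar>u - u0\<bar> < \<eta>0 \<Longrightarrow> \<bar>(\<Sum>i\<le>k. \<beta> i * u^i) - (\<Sum>i\<le>k. \<beta> i * u0^i)\<bar> < \<rho> / 2"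
    using \<open>\<rho> > 0\<close> unfolding continuous_at_eps_delta dist_real_def by (meson half_gt_zero)
  define \<eta> where "\<eta> = min \<eta>0 1"
  define B :: real where "B = (2 + \<bar>u0\<bar>)^k"
  have B: "B > 0"
    by (simp add: B_def)
  have "(\<lambda>D. \<Sum>i\<le>k. \<bar>b D i - \<beta> i\<bar>) \<longlonglongrightarrow> (\<Sum>i\<le>k. \<bar>\<beta> i - \<beta> i\<bar>)"
    by (intro tendsto_intros conv) simp
  then have "eventually (\<lambda>D. (\<Sum>i\<le>k. \<bar>b D i - \<beta> i\<bar>) < \<rho> / (2 * B)) sequentially"
    using \<open>\<rho> > 0\<close> B by (auto intro: order_tendstoD(2))
  then have "eventually (\<lambda>D. \<forall>u. \<bar>u - u0\<bar> < \<eta> \<longrightarrow>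
      \<bar>(\<Sum>i\<le>k. b D i * u^i) - (\<Sum>i\<le>k. \<beta> i * u0^i)\<bar> < \<rho>) sequentially"
  proof (rule eventually_mono, intro allI impI)
    fix D u
    assume small: "(\<Sum>i\<le>k. \<bar>b D i - \<beta> i\<bar>) < \<rho> / (2 * B)" and u: "\<bar>u - u0\<bar> < \<eta>"
    have "(1 + \<bar>u\<bar>)^k \<le> B"
      unfolding B_def using u by (intro power_mono) (auto simp: \<eta>_def)
    then have "\<bar>\<Sum>i\<le>k. (b D i - \<beta> i) * u^i\<bar> \<le> \<rho> / (2 * B) * B"
      using abs_sum_power_le[of "\<lambda>i. b D i - \<beta> i" u k] small
      by (smt (verit, best) mult_mono sum_nonneg abs_ge_zero zero_le_power)
    then have "\<bar>(\<Sum>i\<le>k. b D i * u^i) - (\<Sum>i\<le>k. \<beta> i * u^i)\<bar> \<le> \<rho> / 2"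
      using B by (simp add: sum_subtractf left_diff_distrib)
    moreover have "\<bar>(\<Sum>i\<le>k. \<beta> i * u^i) - (\<Sum>i\<le>k. \<beta> i * u0^i)\<bar> < \<rho> / 2"
      using near u by (simp add: \<eta>_def)
    ultimately show "\<bar>(\<Sum>i\<le>k. b D i * u^i) - (\<Sum>i\<le>k. \<beta> i * u0^i)\<bar> < \<rho>"
      by linarith
  qed
  moreover have "\<eta> > 0"
    using \<eta>0 by (simp add: \<eta>_def)
  ultimately show ?thesis
    by blast
qed

lemma powr_square_poly_growth:
  fixes b :: "nat \<Rightarrow> nat \<Rightarrow> real" and \<beta> :: "nat \<Rightarrow> real" and q :: real
  assumes conv: "\<And>i. i \<le> k \<Longrightarrow> (\<lambda>D. b D i) \<longlonglongrightarrow> \<beta> i" and q: "q > 0"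
    and N: "2 * real k * q \<le> real N"
  shows "\<exists>M. eventually (\<lambda>D. \<forall>u\<ge>0. ((\<Sum>i\<le>k. b D i * u^i)^2) powr q \<le> M * (1 + u)^N) sequentially"
proof -
  define A where "A = (\<Sum>i\<le>k. \<bar>\<beta> i\<bar>) + 1"
  have A: "A > 0"
    by (simp add: A_def add_nonneg_pos sum_nonneg)
  have "(\<lambda>D. \<Sum>i\<le>k. \<bar>b D i\<bar>) \<longlonglongrightarrow> (\<Sum>i\<le>k. \<bar>\<beta> i\<bar>)"
    by (intro tendsto_intros conv) simp
  then have "eventually (\<lambda>D. (\<Sum>i\<le>k. \<bar>b D i\<bar>) < A) sequentially"
    by (rule order_tendstoD(2)) (simp add: A_def)
  then have "eventually (\<lambda>D. \<forall>u\<ge>0. ((\<Sum>i\<le>k. b D i * u^i)^2) powr q \<le> A powr (2 * q) * (1 + u)^N)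
      sequentially"
  proof (rule eventually_mono, intro allI impI)
    fix D and u :: real
    assume bound: "(\<Sum>i\<le>k. \<bar>b D i\<bar>) < A" and u: "u \<ge> 0"
    define x where "x = (\<Sum>i\<le>k. b D i * u^i)"
    have "(\<Sum>i\<le>k. \<bar>b D i\<bar>) * (1 + u)^k \<le> A * (1 + u)^k"
      using bound u by (intro mult_right_mono) auto
    then have "\<bar>x\<bar> \<le> A * (1 + u)^k"
      unfolding x_def by (rule order_trans[OF abs_sum_power_le[of "b D" u k, unfolded abs_of_nonneg[OF u]]])
    then have "x^2 \<le> (A * (1 + u)^k)^2"
      using power_mono[OF _ abs_ge_zero, of x "A * (1 + u)^k" 2] by simp
    then have "(x^2) powr q \<le> ((A * (1 + u)^k)^2) powr q"
      using q by (intro powr_mono2) auto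
    also have "\<dots> = (A * (1 + u)^k) powr (2 * q)"
      using A u by (simp add: powr_powr[of _ 2 q, symmetric] powr_numeral)
    also have "\<dots> = A powr (2 * q) * ((1 + u) powr real k) powr (2 * q)"
      using A u by (simp add: powr_mult powr_realpow)
    also have "\<dots> = A powr (2 * q) * (1 + u) powr (2 * real k * q)"
      by (simp add: powr_powr mult_ac)
    also have "\<dots> \<le> A powr (2 * q) * (1 + u)^N"
      using u N by (subst powr_realpow[symmetric]) (auto intro!: mult_left_mono powr_mono)
    finally show "((\<Sum>i\<le>k. b D i * u^i)^2) powr q \<le> A powr (2 * q) * (1 + u)^N"
      unfolding x_def .
  qed
  then show ?thesis
    by blast
qed

lemma abs_diff_le_near_far:
  fixes u u0 y y0 M \<epsilon> \<eta> :: real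
  assumes u: "u \<ge> 0" and \<eta>: "\<eta> > 0" and \<epsilon>: "\<epsilon> > 0"
    and y: "0 \<le> y" "y \<le> M * (1 + u)^N" and y0: "y0 \<ge> 0"
    and near: "\<bar>u - u0\<bar> < \<eta> \<Longrightarrow> \<bar>y - y0\<bar> < \<epsilon>"
  shows "\<bar>y - y0\<bar> \<le> \<epsilon> + (M + y0) / \<eta>^2 * ((u - u0)^2 * (1 + u)^N)"
proof -
  have "M \<ge> 0"
    using y u by (smt (verit) zero_le_mult_iff zero_less_power)
  then have C: "(M + y0) / \<eta>^2 \<ge> 0"
    using y0 by simp
  show ?thesis
  proof (cases "\<bar>u - u0\<bar> < \<eta>")
    case True
    then show ?thesis
      using near C u by (smt (verit) mult_nonneg_nonneg zero_le_power zero_le_power2)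
  next
    case False
    then have "\<eta>^2 \<le> (u - u0)^2"
      using power_mono[of \<eta> "\<bar>u - u0\<bar>" 2] \<eta> by simp
    then have "(M + y0) / \<eta>^2 * (\<eta>^2 * (1 + u)^N) \<le> (M + y0) / \<eta>^2 * ((u - u0)^2 * (1 + u)^N)"
      using C u by (intro mult_left_mono mult_right_mono) auto
    moreover have "(M + y0) / \<eta>^2 * (\<eta>^2 * (1 + u)^N) = M * (1 + u)^N + y0 * (1 + u)^N"
      using \<eta> by (simp add: field_simps)
    moreover have "y0 \<le> y0 * (1 + u)^N"
      using u y0 mult_left_mono[of 1 "(1 + u)^N" y0] by simp
    ultimately show ?thesis
      using y y0 \<epsilon> unfolding abs_le_iff by linarith
  qed
qed

lemma powr_square_poly_deviation:
  fixes b :: "nat \<Rightarrow> nat \<Rightarrow> real" and \<beta> :: "nat \<Rightarrow> real" and q \<epsilon> :: real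
  assumes conv: "\<And>i. i \<le> k \<Longrightarrow> (\<lambda>D. b D i) \<longlonglongrightarrow> \<beta> i" and q: "q > 0"
    and N: "2 * real k * q \<le> real N" and nz: "(\<Sum>i\<le>k. \<beta> i * (1 / q)^i) \<noteq> 0" and \<epsilon>: "\<epsilon> > 0"
  shows "\<exists>C. eventually (\<lambda>D. \<forall>u\<ge>0. \<bar>((\<Sum>i\<le>k. b D i * u^i)^2) powr q
      - ((\<Sum>i\<le>k. \<beta> i * (1 / q)^i)^2) powr q\<bar> \<le> \<epsilon> + C * ((u - 1 / q)^2 * (1 + u)^N)) sequentially"
proof -
  define x0 where "x0 = (\<Sum>i\<le>k. \<beta> i * (1 / q)^i)"
  define \<phi> where "\<phi> x = (x^2) powr q" for x :: real
  have "continuous (at x0) \<phi>"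
    unfolding \<phi>_def using nz by (intro continuous_intros) (auto simp: x0_def)
  then obtain \<rho> where "\<rho> > 0" and \<rho>: "\<And>x. \<bar>x - x0\<bar> < \<rho> \<Longrightarrow> \<bar>\<phi> x - \<phi> x0\<bar> < \<epsilon>"
    using \<epsilon> unfolding continuous_at_eps_delta dist_real_def by blast
  obtain \<eta> where "\<eta> > 0" and \<eta>: "eventually (\<lambda>D. \<forall>u. \<bar>u - 1 / q\<bar> < \<eta> \<longrightarrow>
      \<bar>(\<Sum>i\<le>k. b D i * u^i) - x0\<bar> < \<rho>) sequentially"
    using poly_coeffs_tendsto_locally_uniform[of k b \<beta>, OF conv \<open>\<rho> > 0\<close>] unfolding x0_def by blast
  obtain M where M: "eventually (\<lambda>D. \<forall>u\<ge>0. \<phi> (\<Sum>i\<le>k. b D i * u^i) \<le> M * (1 + u)^N) sequentially"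
    using powr_square_poly_growth[of k b \<beta>, OF conv q N] unfolding \<phi>_def by blast
  have "eventually (\<lambda>D. \<forall>u\<ge>0. \<bar>\<phi> (\<Sum>i\<le>k. b D i * u^i) - \<phi> x0\<bar>
      \<le> \<epsilon> + (M + \<phi> x0) / \<eta>^2 * ((u - 1 / q)^2 * (1 + u)^N)) sequentially"
    using \<eta> M
  proof eventually_elim
    case (elim D)
    show ?case
      using elim \<rho> \<open>\<eta> > 0\<close> \<epsilon>
      by (intro allI impI abs_diff_le_near_far) (auto simp: \<phi>_def)
  qed
  then show ?thesis
    unfolding \<phi>_def x0_def by blast
qed

lemma gamma_weight_powr_square_poly_limit:
  fixes b :: "nat \<Rightarrow> nat \<Rightarrow> real" and \<beta> :: "nat \<Rightarrow> real" and c q :: real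
  assumes conv: "\<And>i. i \<le> k \<Longrightarrow> (\<lambda>D. b D i) \<longlonglongrightarrow> \<beta> i" and q: "q > 0"
    and nz: "(\<Sum>i\<le>k. \<beta> i * (1 / q)^i) \<noteq> 0"
  shows "(\<lambda>D::nat. (\<integral>s. gamma_weight (real D + c) s
      * ((\<Sum>i\<le>k. b D i * (s / (q * real D))^i)^2) powr q \<partial>lborel) / Gamma (real D + c + 1))
      \<longlonglongrightarrow> ((\<Sum>i\<le>k. \<beta> i * (1 / q)^i)^2) powr q"
  using q powr_square_poly_deviation[of k b \<beta>, OF conv q _ nz, of "nat \<lceil>2 * real k * q\<rceil>"]
  by (intro gamma_weight_concentration[where g = "\<lambda>D u. ((\<Sum>i\<le>k. b D i * u^i)^2) powr q"]) auto

section \<open>Laguerre polynomials of large parameter\<close>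

definition laguerre_coeff :: "nat \<Rightarrow> real \<Rightarrow> nat \<Rightarrow> real" where
  "laguerre_coeff k \<alpha> i = (-1)^i * Gamma (real k + \<alpha> + 1) / (Gamma (real i + \<alpha> + 1) * fact (k - i) * fact i)"

lemma laguerre_eq_sum_coeff: "laguerre k \<alpha> x = (\<Sum>i\<le>k. laguerre_coeff k \<alpha> i * x^i)"
  unfolding laguerre_def laguerre_coeff_def ..

lemma laguerre_coeff_asymptotic:
  fixes c :: real
  assumes "i \<le> k"
  shows "(\<lambda>D::nat. laguerre_coeff k (real D + c) i * real D^i / real D^k)
    \<longlonglongrightarrow> (-1)^i / (fact (k - i) * fact i)"
proof -
  define a where "a = c + real i + 1"
  have "(\<lambda>D::nat. (-1)^i / (fact (k - i) * fact i)
      * (Gamma (real D + a + real (k - i)) / (Gamma (real D + a) * real D powr real (k - i))))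
      \<longlonglongrightarrow> (-1)^i / (fact (k - i) * fact i) * 1"
    by (intro tendsto_intros Gamma_shift_ratio_asymptotic)
  moreover have eq: "(-1)^i / (fact (k - i) * fact i)
      * (Gamma (real D + a + real (k - i)) / (Gamma (real D + a) * real D powr real (k - i)))
      = laguerre_coeff k (real D + c) i * real D^i / real D^k" if "D > 0" for D :: nat
  proof -
    have G1: "Gamma (real k + (real D + c) + 1) = Gamma (real D + a + real (k - i))"
      by (rule arg_cong[where f = Gamma]) (use assms in \<open>simp add: a_def of_nat_diff\<close>)
    have G2: "Gamma (real i + (real D + c) + 1) = Gamma (real D + a)"
      by (rule arg_cong[where f = Gamma]) (simp add: a_def)
    have "real D powr real (k - i) = real D^(k - i)"
      by (rule powr_realpow) (use that in simp)
    then have "real D^k = real D^i * real D powr real (k - i)"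
      using assms by (simp add: power_add[symmetric])
    then show ?thesis
      unfolding laguerre_coeff_def G1 G2 using that by (simp add: field_simps)
  qed
  moreover have "eventually (\<lambda>D. (-1)^i / (fact (k - i) * fact i)
      * (Gamma (real D + a + real (k - i)) / (Gamma (real D + a) * real D powr real (k - i)))
      = laguerre_coeff k (real D + c) i * real D^i / real D^k) sequentially"
    using eventually_gt_at_top[of 0] by eventually_elim (rule eq)
  ultimately show ?thesis
    using Lim_transform_eventually by fastforce
qed

lemma sum_binomial_coeffs_power:
  fixes u :: real
  shows "(\<Sum>i\<le>k. (-1)^i / (fact (k - i) * fact i) * u^i) = (1 - u)^k / fact k"
proof -
  have "(1 - u)^k = (\<Sum>i\<le>k. of_nat (k choose i) * (- u)^i * 1^(k - i))"
    using binomial_ring[of "- u" 1 k] by simp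
  also have "\<dots> = fact k * (\<Sum>i\<le>k. (-1)^i / (fact (k - i) * fact i) * u^i)"
    unfolding sum_distrib_left
    by (intro sum.cong) (simp_all add: binomial_fact power_minus' field_simps)
  finally show ?thesis
    by simp
qed

text \<open>What remains of the Renyi integral after the substitution \<open>r = \<lambda> x / q\<close> and the removal of
  an explicit prefactor.\<close>

definition hyd_scaled_integral :: "nat \<Rightarrow> nat \<Rightarrow> real \<Rightarrow> nat \<Rightarrow> real" where
  "hyd_scaled_integral n l q D =
     (\<integral>s. gamma_weight (real D + (2 * real l * q - 1)) s
        * ((laguerre (n - l - 1) (real D + (2 * real l - 2)) (s / q) / real D^(n - l - 1))^2) powr q
      \<partial>lborel) / Gamma (real D + 2 * real l * q)"

lemma hyd_scaled_integral_limit: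
  fixes q :: real
  assumes q: "q > 0" and "q \<noteq> 1"
  shows "hyd_scaled_integral n l q \<longlonglongrightarrow> (((1 - 1 / q)^(n - l - 1) / fact (n - l - 1))^2) powr q"
proof -
  define k where "k = n - l - 1"
  define b where "b D i = laguerre_coeff k (real D + (2 * real l - 2)) i * real D^i / real D^k" for D i
  define \<beta> :: "nat \<Rightarrow> real" where "\<beta> i = (-1)^i / (fact (k - i) * fact i)" for i
  have \<beta>_sum: "(\<Sum>i\<le>k. \<beta> i * (1 / q)^i) = (1 - 1 / q)^k / fact k"
    unfolding \<beta>_def by (rule sum_binomial_coeffs_power)
  have "1 - 1 / q \<noteq> 0"
    using assms by (simp add: field_simps)
  then have "(\<lambda>D::nat. (\<integral>s. gamma_weight (real D + (2 * real l * q - 1)) s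
      * ((\<Sum>i\<le>k. b D i * (s / (q * real D))^i)^2) powr q \<partial>lborel)
      / Gamma (real D + (2 * real l * q - 1) + 1)) \<longlonglongrightarrow> (((1 - 1 / q)^k / fact k)^2) powr q"
    unfolding \<beta>_sum[symmetric] unfolding b_def \<beta>_def
    by (intro gamma_weight_powr_square_poly_limit laguerre_coeff_asymptotic q)
      (use \<beta>_sum assms in \<open>simp_all add: \<beta>_def\<close>)
  moreover have integrand_eq: "(\<Sum>i\<le>k. b D i * (s / (q * real D))^i)
      = laguerre k (real D + (2 * real l - 2)) (s / q) / real D^k" if "D > 0" for D s
    unfolding b_def laguerre_eq_sum_coeff sum_divide_distrib
    using that q by (intro sum.cong) (simp_all add: power_divide power_mult_distrib field_simps)
  moreover have "eventually (\<lambda>D. (\<integral>s. gamma_weight (real D + (2 * real l * q - 1)) s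
      * ((\<Sum>i\<le>k. b D i * (s / (q * real D))^i)^2) powr q \<partial>lborel)
      / Gamma (real D + (2 * real l * q - 1) + 1) = hyd_scaled_integral n l q D) sequentially"
    using eventually_gt_at_top[of 0]
    by eventually_elim (simp add: hyd_scaled_integral_def integrand_eq flip: k_def, simp add: k_def)
  ultimately show ?thesis
    unfolding k_def by (blast intro: Lim_transform_eventually)
qed

section \<open>The Renyi integral of the hydrogenic density\<close>

lemma hyd_eta_lambda_pos:
  assumes "Z > 0" "n \<ge> 1" "D \<ge> 2"
  shows "hyd_eta D n > 0" "hyd_lambda Z D n > 0"
  using assms by (auto simp: hyd_eta_def hyd_lambda_def field_simps)

lemma hyd_rho_scaled:
  fixes Z t :: real and n l D :: nat
  assumes Z: "Z > 0" and l: "l < n" and D: "D \<ge> 2"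
  defines "lam \<equiv> hyd_lambda Z D n" and "k \<equiv> n - l - 1"
  shows "hyd_rho Z D n l (lam * t)
    = lam powr (- real D) / (2 * hyd_eta D n) * fact k / Gamma (real D + (real n + real l - 2))
      * t powr (2 * real l) * exp (- t) * (laguerre k (real D + (2 * real l - 2)) t)^2"
proof -
  have "lam > 0"
    using hyd_eta_lambda_pos[of Z n D] assms by simp
  then have t: "lam * t / lam = t"
    by simp
  have L: "2 * hyd_L D l + 1 = real D + (2 * real l - 2)"
    by (simp add: hyd_L_def field_simps)
  have G: "Gamma (real k + (real D + (2 * real l - 2)) + 1) = Gamma (real D + (real n + real l - 2))"
    using l by (simp add: k_def of_nat_diff algebra_simps)
  have "Gamma (real D + (real n + real l - 2)) > 0"
    using l D by (intro Gamma_real_pos) simp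
  then show ?thesis
    unfolding hyd_rho_def Let_def laguerre_on_def lam_def[symmetric] k_def[symmetric] t L G
    by (simp add: power_mult_distrib)
qed

lemma hyd_rho_powr_scaled:
  fixes Z q x :: real and n l D :: nat
  assumes Z: "Z > 0" and l: "l < n" and q: "q > 0" and D: "D \<ge> 2" and x: "x > 0"
  defines "lam \<equiv> hyd_lambda Z D n" and "k \<equiv> n - l - 1"
  shows "hyd_rho Z D n l (lam / q * x) powr q * (lam / q * x)^(D - 1)
    = (lam / q)^(D - 1) * (lam powr (- real D) / (2 * hyd_eta D n) * fact k
        / Gamma (real D + (real n + real l - 2))) powr q
      * q powr (- (2 * real l * q)) * real D powr (2 * real k * q)
      * (gamma_weight (real D + (2 * real l * q - 1)) x
        * ((laguerre k (real D + (2 * real l - 2)) (x / q) / real D^k)^2) powr q)"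
proof -
  define A where "A = lam powr (- real D) / (2 * hyd_eta D n) * fact k / Gamma (real D + (real n + real l - 2))"
  define L where "L = laguerre k (real D + (2 * real l - 2)) (x / q)"
  have lam: "lam > 0"
    using hyd_eta_lambda_pos[of Z n D] assms by simp
  have A: "A \<ge> 0"
    using hyd_eta_lambda_pos[of Z n D] assms Gamma_real_pos[of "real D + (real n + real l - 2)"]
    by (simp add: A_def)
  have "hyd_rho Z D n l (lam / q * x) = A * (x / q) powr (2 * real l) * exp (- (x / q)) * L^2"
    using hyd_rho_scaled[OF Z l D, of "x / q"] lam q
    by (simp add: A_def L_def lam_def k_def mult.assoc)
  then have "hyd_rho Z D n l (lam / q * x) powr q
      = A powr q * (x powr (2 * real l * q) * q powr (- (2 * real l * q))) * exp (- x) * (L^2) powr q"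
    using A x q
    by (simp add: powr_mult powr_powr powr_divide powr_minus_divide exp_powr_real mult_ac)
  moreover have "(L^2) powr q = real D powr (2 * real k * q) * ((L / real D^k)^2) powr q"
  proof -
    have "L^2 = (real D^k)^2 * (L / real D^k)^2"
      using D by (simp add: power_divide)
    moreover have "((real D^k)^2) powr q = real D powr (2 * real k * q)"
      using D by (simp add: powr_realpow[symmetric] powr_powr power_mult[symmetric] mult_ac
          del: powr_realpow)
    ultimately show ?thesis
      by (simp add: powr_mult)
  qed
  moreover have "x powr (2 * real l * q) * x^(D - 1) * exp (- x)
      = gamma_weight (real D + (2 * real l * q - 1)) x"
    using x D by (simp add: gamma_weight_def powr_realpow[symmetric] powr_add[symmetric] of_nat_diff
        del: powr_realpow) (simp add: algebra_simps)
  ultimately show ?thesis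
    unfolding A_def[symmetric] L_def[symmetric] power_mult_distrib[of "lam / q" x]
    by (simp add: mult_ac)
qed

lemma hyd_renyi_integral_eq:
  fixes Z q :: real and n l D :: nat
  assumes Z: "Z > 0" and l: "l < n" and q: "q > 0" and D: "D \<ge> 2"
  defines "lam \<equiv> hyd_lambda Z D n" and "k \<equiv> n - l - 1"
  shows "(LBINT r:{0<..}. hyd_rho Z D n l r powr q * r^(D - 1))
    = (lam / q)^D * (lam powr (- real D) / (2 * hyd_eta D n) * fact k
        / Gamma (real D + (real n + real l - 2))) powr q
      * q powr (- (2 * real l * q)) * real D powr (2 * real k * q) * Gamma (real D + 2 * real l * q)
      * hyd_scaled_integral n l q D"
proof -
  define a where "a = lam / q"
  have a: "a > 0"
    using hyd_eta_lambda_pos[of Z n D] assms by (simp add: a_def)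
  have G: "Gamma (real D + 2 * real l * q) > 0"
    using D q by (intro Gamma_real_pos add_pos_nonneg) auto
  define g where "g r = hyd_rho Z D n l r powr q * r^(D - 1)" for r
  define K where "K = (lam / q)^(D - 1) * (lam powr (- real D) / (2 * hyd_eta D n) * fact k
      / Gamma (real D + (real n + real l - 2))) powr q * q powr (- (2 * real l * q)) * real D powr (2 * real k * q)"
  define F where "F x = gamma_weight (real D + (2 * real l * q - 1)) x
      * ((laguerre k (real D + (2 * real l - 2)) (x / q) / real D^k)^2) powr q" for x
  have scaled: "indicator {0<..} (0 + a * x) *\<^sub>R g (0 + a * x) = K * F x" for x
  proof (cases "x > 0")
    case True
    then have "indicator {0<..} (0 + a * x) *\<^sub>R g (0 + a * x) = g (a * x)"
      using a by simp
    also have "g (a * x) = K * F x"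
      unfolding g_def K_def F_def a_def lam_def k_def by (rule hyd_rho_powr_scaled[OF Z l q D True])
    finally show ?thesis .
  next
    case False
    then show ?thesis
      using a by (simp add: F_def gamma_weight_def indicator_def zero_less_mult_iff)
  qed
  have "(LBINT r:{0<..}. g r) = \<bar>a\<bar> *\<^sub>R (\<integral>x. indicator {0<..} (0 + a * x) *\<^sub>R g (0 + a * x) \<partial>lborel)"
    unfolding set_lebesgue_integral_def using a by (intro lborel_integral_real_affine) simp
  also have "\<dots> = a * K * (\<integral>x. F x \<partial>lborel)"
    unfolding scaled using a by simp
  also have "(\<integral>x. F x \<partial>lborel) = Gamma (real D + 2 * real l * q) * hyd_scaled_integral n l q D"
    using G by (simp add: hyd_scaled_integral_def F_def k_def)
  finally show ?thesis
    using D unfolding g_def K_def a_def by (simp add: power_eq_if mult_ac)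
qed

lemma ln_hyd_renyi_integral:
  fixes Z q :: real and n l D :: nat
  assumes Z: "Z > 0" and l: "l < n" and q: "q > 0" and D: "D \<ge> 2"
    and pos: "hyd_scaled_integral n l q D > 0"
  defines "\<Lambda> \<equiv> ln (real D + (2 * real n - 3))" and "k \<equiv> n - l - 1"
  shows "ln (LBINT r:{0<..}. hyd_rho Z D n l r powr q * r^(D - 1))
    = (1 - q) * real D * (\<Lambda> - ln (4 * Z)) - real D * ln q - q * \<Lambda> + q * ln (fact k)
      - q * ln (Gamma (real D + (real n + real l - 2))) - 2 * real l * q * ln q
      + 2 * real k * q * ln (real D) + ln (Gamma (real D + 2 * real l * q)) + ln (hyd_scaled_integral n l q D)"
proof -
  define lam where "lam = hyd_lambda Z D n"
  have two_eta: "2 * hyd_eta D n = real D + (2 * real n - 3)"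
    by (simp add: hyd_eta_def field_simps)
  have "lam = (real D + (2 * real n - 3)) / (4 * Z)"
    unfolding lam_def hyd_lambda_def two_eta[symmetric] by simp
  moreover have arg_pos: "real D + (2 * real n - 3) > 0"
    using l D by linarith
  ultimately have ln_lam: "ln lam = \<Lambda> - ln (4 * Z)"
    using Z by (simp add: \<Lambda>_def ln_div)
  have lam: "lam > 0" and G1: "Gamma (real D + (real n + real l - 2)) > 0"
      and G2: "Gamma (real D + 2 * real l * q) > 0"
    using hyd_eta_lambda_pos[of Z n D] assms
    by (auto simp: lam_def intro!: Gamma_real_pos add_pos_nonneg)
  define A where "A = lam powr (- real D) / (2 * hyd_eta D n) * fact k / Gamma (real D + (real n + real l - 2))"
  have A: "A > 0"
    using lam G1 hyd_eta_lambda_pos[of Z n D] assms by (simp add: A_def)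
  have ln_A: "ln A = - real D * (\<Lambda> - ln (4 * Z)) - \<Lambda> + ln (fact k) - ln (Gamma (real D + (real n + real l - 2)))"
    using lam G1 ln_lam arg_pos Z by (simp add: A_def ln_div ln_mult two_eta \<Lambda>_def)
  have "ln (LBINT r:{0<..}. hyd_rho Z D n l r powr q * r^(D - 1))
      = ln ((lam / q)^D * A powr q * q powr (- (2 * real l * q)) * real D powr (2 * real k * q)
          * Gamma (real D + 2 * real l * q) * hyd_scaled_integral n l q D)"
    unfolding hyd_renyi_integral_eq[OF Z l q D] lam_def A_def k_def ..
  also have "\<dots> = real D * (ln lam - ln q) + q * ln A - 2 * real l * q * ln q + 2 * real k * q * ln (real D)
      + ln (Gamma (real D + 2 * real l * q)) + ln (hyd_scaled_integral n l q D)"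
    using lam q A D G2 pos by (simp add: ln_mult ln_realpow ln_div ln_powr zero_less_mult_iff)
  finally show ?thesis
    unfolding ln_A ln_lam by (simp add: algebra_simps)
qed

lemma ln_hyd_scaled_integral_limit:
  fixes q :: real and n l :: nat
  assumes q: "q > 0" "q \<noteq> 1"
  defines "k \<equiv> n - l - 1"
  shows "eventually (\<lambda>D. hyd_scaled_integral n l q D > 0) sequentially"
    and "(\<lambda>D. ln (hyd_scaled_integral n l q D))
      \<longlonglongrightarrow> q * (2 * real k * (ln \<bar>q - 1\<bar> - ln q) - 2 * ln (fact k))"
proof -
  define \<phi> where "\<phi> = (((1 - 1 / q)^k / fact k)^2) powr q"
  have lim: "hyd_scaled_integral n l q \<longlonglongrightarrow> \<phi>"
    unfolding \<phi>_def k_def using hyd_scaled_integral_limit[OF q] .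
  have "1 - 1 / q = (q - 1) / q"
    using q by (simp add: field_simps)
  then have x: "\<bar>(1 - 1 / q)^k / fact k\<bar> = (\<bar>q - 1\<bar> / q)^k / fact k"
    using q by (simp add: power_abs abs_divide)
  have "\<bar>q - 1\<bar> > 0"
    using q by simp
  then have \<phi>: "\<phi> > 0"
    unfolding \<phi>_def using q by (simp add: x)
  with lim show "eventually (\<lambda>D. hyd_scaled_integral n l q D > 0) sequentially"
    by (rule order_tendstoD(1))
  have "ln \<phi> = q * ln (((1 - 1 / q)^k / fact k)^2)"
    using \<phi> by (simp add: \<phi>_def ln_powr)
  also have "\<dots> = q * (2 * ln \<bar>(1 - 1 / q)^k / fact k\<bar>)"
    using \<phi> by (subst power2_abs[symmetric], subst ln_realpow) (auto simp: \<phi>_def)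
  also have "\<dots> = q * (2 * real k * (ln \<bar>q - 1\<bar> - ln q) - 2 * ln (fact k))"
    unfolding x using q \<open>\<bar>q - 1\<bar> > 0\<close> by (simp add: ln_div ln_realpow algebra_simps)
  finally show "(\<lambda>D. ln (hyd_scaled_integral n l q D))
      \<longlonglongrightarrow> q * (2 * real k * (ln \<bar>q - 1\<bar> - ln q) - 2 * ln (fact k))"
    using tendsto_ln[OF lim] \<phi> by simp
qed

lemma ln_calF:
  fixes q :: real and n l :: nat
  assumes q: "q > 0" "q \<noteq> 1" and l: "l < n"
  defines "k \<equiv> n - l - 1"
  shows "ln (calF n l q) = (1 - q) / 2 * ln (2 * pi) + 2 * real k * q * ln \<bar>q - 1\<bar> - q * ln (fact k)
    + (2 * real n - 3) * (1 - q) - 2 * q * (real n - 1) * ln q"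
proof -
  have "Gamma (real (n - l)) = fact k"
    using Gamma_fact[of k] l by (simp add: k_def Suc_diff_Suc add.commute)
  moreover have "\<bar>q - 1\<bar> > 0"
    using q by simp
  ultimately show ?thesis
    unfolding calF_def k_def[symmetric] using q pi_gt_zero by (simp add: ln_div ln_mult ln_powr)
qed

lemma renyi_rad_minus_expansion:
  fixes Z q :: real and n l D :: nat
  assumes Z: "Z > 0" and l: "l < n" and q: "q > 0" "q \<noteq> 1" and D: "D \<ge> 2"
    and pos: "hyd_scaled_integral n l q D > 0"
  defines "\<Lambda> \<equiv> ln (real D + (2 * real n - 3))" and "k \<equiv> n - l - 1"
  shows "renyi_rad Z D n l q
      - (2 * real D * ln (real D) + real D * ln (q powr (1 / (q - 1)) / (4 * Z * exp 1))
        + (q * (real n - real l - 1/2) - 1/2) / (1 - q) * ln (real D) + 1 / (1 - q) * ln (calF n l q))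
    = ((1 - q) * (real D * \<Lambda> - real D * ln (real D) - (2 * real n - 3)) - q * (\<Lambda> - ln (real D))
      - q * ln_Gamma_stirling_error (real n + real l - 2) D
      + ln_Gamma_stirling_error (2 * real l * q) D
      + (ln (hyd_scaled_integral n l q D) - q * (2 * real k * (ln \<bar>q - 1\<bar> - ln q) - 2 * ln (fact k))))
      / (1 - q)"
proof -
  have "ln (q powr (1 / (q - 1)) / (4 * Z * exp 1)) = ln q / (q - 1) - ln (4 * Z) - 1"
    using q Z by (simp add: ln_div ln_mult ln_powr)
  also have "ln q / (q - 1) = - (ln q / (1 - q))"
    by (simp add: minus_divide_right)
  finally have T: "ln (q powr (1 / (q - 1)) / (4 * Z * exp 1)) = - (ln q / (1 - q)) - ln (4 * Z) - 1" .
  have k: "real k = real n - real l - 1"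
    using l by (simp add: k_def of_nat_diff)
  have "1 - q \<noteq> 0"
    using q by simp
  \<comment> \<open>Abstracting the logarithms keeps the field normalisation below small.\<close>
  define LD LZ Lq Lk L2 G1 G2 LE
    where "LD = ln (real D)" and "LZ = ln (4 * Z)" and "Lq = ln q" and "Lk = ln (fact k)"
      and "L2 = ln (2 * pi)" and "G1 = ln (Gamma (real D + (real n + real l - 2)))"
      and "G2 = ln (Gamma (real D + 2 * real l * q))" and "LE = ln (hyd_scaled_integral n l q D)"
  show ?thesis
    unfolding renyi_rad_def ln_hyd_renyi_integral[OF Z l q(1) D pos] ln_calF[OF q l] T
      ln_Gamma_stirling_error_def
      \<Lambda>_def[symmetric] k_def[symmetric] LD_def[symmetric] LZ_def[symmetric] Lq_def[symmetric]
      Lk_def[symmetric] L2_def[symmetric] G1_def[symmetric] G2_def[symmetric] LE_def[symmetric]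
    using k \<open>1 - q \<noteq> 0\<close> by (simp add: divide_simps) (simp add: algebra_simps)
qed

theorem mainTheorem2:
  fixes Z q :: real and n l :: nat
  assumes "Z > 0" and "n \<ge> 1" and "l \<le> n - 1" and "q > 0" and "q \<noteq> 1"
  shows "(\<lambda>D::nat. renyi_rad Z D n l q
            - (2 * real D * ln (real D)
               + real D * ln (q powr (1 / (q - 1)) / (4 * Z * exp 1))
               + (q * (real n - real l - 1/2) - 1/2) / (1 - q) * ln (real D)
               + 1 / (1 - q) * ln (calF n l q)))
         \<longlonglongrightarrow> 0"
proof -
  have l: "l < n"
    using assms(2,3) by linarith
  define \<Lambda> where "\<Lambda> D = ln (real D + (2 * real n - 3))" for D :: nat
  have "(\<lambda>D. real D * \<Lambda> D - real D * ln (real D) - (2 * real n - 3)) \<longlonglongrightarrow> 0"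
    "(\<lambda>D. \<Lambda> D - ln (real D)) \<longlonglongrightarrow> 0"
    unfolding \<Lambda>_def by real_asymp+
  then have "(\<lambda>D. ((1 - q) * (real D * \<Lambda> D - real D * ln (real D) - (2 * real n - 3)) - q * (\<Lambda> D - ln (real D))
      - q * ln_Gamma_stirling_error (real n + real l - 2) D + ln_Gamma_stirling_error (2 * real l * q) D
      + (ln (hyd_scaled_integral n l q D)
        - q * (2 * real (n - l - 1) * (ln \<bar>q - 1\<bar> - ln q) - 2 * ln (fact (n - l - 1))))) / (1 - q))
      \<longlonglongrightarrow> ((1 - q) * 0 - q * 0 - q * 0 + 0 + 0) / (1 - q)" (is "?R \<longlonglongrightarrow> _")
    using ln_hyd_scaled_integral_limit(2)[OF assms(4,5), of n l] assms(5)
    by (intro tendsto_intros ln_Gamma_stirling) (auto simp: LIM_zero_iff)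
  then have lim: "?R \<longlonglongrightarrow> 0"
    by simp
  have ev: "eventually (\<lambda>D. hyd_scaled_integral n l q D > 0 \<and> D \<ge> 2) sequentially"
    using ln_hyd_scaled_integral_limit(1)[OF assms(4,5)] eventually_ge_at_top by (rule eventually_conj)
  show ?thesis
    by (rule Lim_transform_eventually[OF lim eventually_mono[OF ev]])
      (unfold \<Lambda>_def, rule renyi_rad_minus_expansion[OF assms(1) l assms(4,5), symmetric], auto)
qed

end
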